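(* Let $z_0=((x^i)_0,(p^B)_0,(p^B_i)_0)\in\tilde U$ and assume that $S_{u}$ is the jet-graph through $z_0$ of an approximate solution $u=(u^A)$ at $x_0$ to the system $u^A_\alpha=F^A_\alpha(x^i,u^B,u^B_\Gamma)$. Then $T_{z_0}S_u$ is an integral element of $\mathcal{I}$. If $E\subset T_{z_0}S_u$ is a linear subspace, then $T_{z_0}S_u\subset H(E)$.
   Context: Let $1\le k<n$, $m\ge1$; indices $i,j\in\{1,\dots,n\}$, $\Lambda,\Gamma\in\{1,\dots,k\}$, $\alpha\in\{k+1,\dots,n\}$, $A,B\in\{1,\dots,m\}$, repeated upper/lower indices summed; $u^A_i=\partial u^A/\partial x^i$. Let $F^A_\alpha(x^i,p^B,p^B_\Lambda)$ be real-analytic on an open $U\subset\mathbb{R}^n\times\mathbb{R}^m\times\mathbb{R}^{mk}$, and $\tilde U:=U\times\mathbb{R}^{(n-k)m}$ with coordinates $z=(x^i,p^A,p^A_i)$. $\mathcal{I}$ is the exterior differential system on $\tilde U$ generated by the functions $f^A_\alpha:=p^A_\alpha-F^A_\alpha(x^i,p^B,p^B_\Gamma)$ and 1-forms $\eta^A:=dp^A-p^A_idx^i$ (algebraically generated by $f^A_\alpha$, $df^A_\alpha$, $\eta^A$, $dp^A_i\wedge dx^i$). An integral element of $\mathcal{I}$ at $z$ is a linear subspace $E\subset T_z\mathbb{R}^{n+m+nm}$ on which every $p$-form of $\mathcal{I}$ vanishes (functions vanishing at $z$); for an $l$-dimensional integral element with basis $e_1,\dots,e_l$, $H(E):=\{v:\phi(v,e_1,\dots,e_l)=0$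 for all $(l+1)$-forms $\phi\in\mathcal{I}\}$. The jet-graph of $u$ is $S_u=\{(x^i,u^B(x^i),u^B_j(x^i))\}$. A real-analytic $u$ near $x_0$ is an approximate solution at $x_0$ to the system if $u^A_\alpha-F^A_\alpha(x^i,u^B,u^B_\Gamma)=O(\sum_i|x^i-x_0^i|^2)$. *)

theory Defs
  imports "HOL-Analysis.Analysis" "HOL-Combinatorics.Permutations"
begin

text \<open>Real analyticity of a real-valued function on a Euclidean space:
  locally the sum of an (unconditionally, i.e. absolutely) convergent
  multivariate power series.\<close>
definition real_analytic_on :: "('e::euclidean_space \<Rightarrow> real) \<Rightarrow> 'e set \<Rightarrow> bool" where
  "real_analytic_on f S \<longleftrightarrow>
     (\<forall>y\<in>S. \<exists>c :: ('e \<Rightarrow> nat) \<Rightarrow> real. \<exists>r>0. \<forall>w\<in>ball y r.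
        ((\<lambda>\<alpha>. c \<alpha> * (\<Prod>b\<in>Basis. ((w - y) \<bullet> b) ^ (\<alpha> b))) has_sum f w)
          {\<alpha>. \<forall>b. b \<notin> Basis \<longrightarrow> \<alpha> b = 0})"

text \<open>Indices: i ranges over 'k + 'a (Inl \<Lambda> for \<Lambda> = 1..k, Inr \<alpha> for \<alpha> = k+1..n),
  A, B range over 'm.  A point z = (x^i, p^A, p^A_i) of the jet space.\<close>
type_synonym ('k, 'a, 'm) jet = "(real^('k + 'a)) \<times> (real^'m) \<times> (real^('k + 'a)^'m)"

text \<open>Arguments (x^i, p^B, p^B_\<Gamma>) of F.\<close>
type_synonym ('k, 'a, 'm) farg = "(real^('k + 'a)) \<times> (real^'m) \<times> (real^'k^'m)"

definition restrP :: "real^('k::finite + 'a::finite)^'m \<Rightarrow> real^'k^'m" where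
  "restrP P = (\<chi> B. \<chi> \<Gamma>. P $ B $ Inl \<Gamma>)"

definition Utilde :: "('k::finite, 'a::finite, 'm::finite) farg set \<Rightarrow> ('k, 'a, 'm) jet set" where
  "Utilde U = {(x, p, P). (x, p, restrP P) \<in> U}"

text \<open>A p-form field on the jet space: (degree, z \<mapsto> (v_1..v_p) \<mapsto> value).\<close>
type_synonym 'v form = "nat \<times> ('v \<Rightarrow> 'v list \<Rightarrow> real)"

definition is_form :: "nat \<Rightarrow> ('v::real_vector \<Rightarrow> 'v list \<Rightarrow> real) \<Rightarrow> bool" where
  "is_form p \<gamma> \<longleftrightarrow> (\<forall>z.
     (\<forall>vs j a b u w. length vs = p \<and> j < p \<longrightarrow>
        \<gamma> z (vs[j := a *\<^sub>R u + b *\<^sub>R w]) = a * \<gamma> z (vs[j := u]) + b * \<gamma> z (vs[j := w])) \<and>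
     (\<forall>vs j l. length vs = p \<and> j < l \<and> l < p \<and> vs ! j = vs ! l \<longrightarrow> \<gamma> z vs = 0))"

definition wedge :: "nat \<Rightarrow> nat \<Rightarrow> ('v \<Rightarrow> 'v list \<Rightarrow> real) \<Rightarrow> ('v \<Rightarrow> 'v list \<Rightarrow> real)
                      \<Rightarrow> ('v \<Rightarrow> 'v list \<Rightarrow> real)" where
  "wedge p q \<alpha> \<beta> = (\<lambda>z vs.
     (\<Sum>\<sigma> | \<sigma> permutes {..<p+q}.
        of_int (sign \<sigma>) * \<alpha> z (map (\<lambda>j. vs ! \<sigma> j) [0..<p])
                        * \<beta> z (map (\<lambda>j. vs ! \<sigma> (p + j)) [0..<q]))
     / (fact p * fact q))"

inductive_set alg_ideal :: "'v::real_vector form set \<Rightarrow> 'v form set" for G where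
  gen: "\<phi> \<in> G \<Longrightarrow> \<phi> \<in> alg_ideal G"
| wedge_left: "(p, \<omega>) \<in> alg_ideal G \<Longrightarrow> is_form q \<gamma> \<Longrightarrow> (q + p, wedge q p \<gamma> \<omega>) \<in> alg_ideal G"
| add: "(p, \<omega>1) \<in> alg_ideal G \<Longrightarrow> (p, \<omega>2) \<in> alg_ideal G \<Longrightarrow>
        (p, \<lambda>z vs. \<omega>1 z vs + \<omega>2 z vs) \<in> alg_ideal G"

definition fgen :: "('m \<Rightarrow> 'a \<Rightarrow> ('k, 'a, 'm) farg \<Rightarrow> real) \<Rightarrow> 'm \<Rightarrow> 'a
                     \<Rightarrow> ('k::finite, 'a::finite, 'm::finite) jet \<Rightarrow> real" where
  "fgen F A \<alpha> z = snd (snd z) $ A $ Inr \<alpha> - F A \<alpha> (fst z, fst (snd z), restrP (snd (snd z)))"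

text \<open>The exterior differential system \<I> on \<tilde>U, given by its algebraic generators
  f^A_\<alpha>, df^A_\<alpha>, \<eta>^A = dp^A - p^A_i dx^i, dp^A_i \<and> dx^i.\<close>
definition EDS_gens :: "('m \<Rightarrow> 'a \<Rightarrow> ('k, 'a, 'm) farg \<Rightarrow> real)
                        \<Rightarrow> ('k::finite, 'a::finite, 'm::finite) jet form set" where
  "EDS_gens F =
     {(0, \<lambda>z vs. fgen F A \<alpha> z) | A \<alpha>. True}
   \<union> {(1, \<lambda>z vs. frechet_derivative (fgen F A \<alpha>) (at z) (hd vs)) | A \<alpha>. True}
   \<union> {(1, \<lambda>z vs. fst (snd (hd vs)) $ A - (\<Sum>i\<in>UNIV. snd (snd z) $ A $ i * fst (hd vs) $ i)) | A. True}
   \<union> {(2, \<lambda>z vs. (\<Sum>i\<in>UNIV. snd (snd (vs ! 0)) $ A $ i * fst (vs ! 1) $ i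
                          - snd (snd (vs ! 1)) $ A $ i * fst (vs ! 0) $ i)) | A. True}"

definition EDS :: "('m \<Rightarrow> 'a \<Rightarrow> ('k, 'a, 'm) farg \<Rightarrow> real)
                   \<Rightarrow> ('k::finite, 'a::finite, 'm::finite) jet form set" where
  "EDS F = alg_ideal (EDS_gens F)"

definition integral_element :: "'v::real_vector form set \<Rightarrow> 'v \<Rightarrow> 'v set \<Rightarrow> bool" where
  "integral_element I z E \<longleftrightarrow> subspace E \<and>
     (\<forall>p \<phi>. (p, \<phi>) \<in> I \<longrightarrow> (\<forall>vs. length vs = p \<and> set vs \<subseteq> E \<longrightarrow> \<phi> z vs = 0))"

text \<open>H(E) computed with respect to a basis es = [e_1,..,e_l] of E.\<close>
definition Hpolar :: "'v::real_vector form set \<Rightarrow> 'v \<Rightarrow> 'v list \<Rightarrow> 'v set" where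
  "Hpolar I z es = {v. \<forall>\<phi>. (Suc (length es), \<phi>) \<in> I \<longrightarrow> \<phi> z (v # es) = 0}"

definition jet :: "(real^('k + 'a) \<Rightarrow> real^'m) \<Rightarrow> real^('k::finite + 'a::finite)
                   \<Rightarrow> ('k, 'a, 'm::finite) jet" where
  "jet u x = (x, u x, \<chi> A. \<chi> i. frechet_derivative u (at x) (axis i 1) $ A)"

definition jet_graph :: "(real^('k + 'a) \<Rightarrow> real^'m) \<Rightarrow> ('k::finite, 'a::finite, 'm::finite) jet set" where
  "jet_graph u = range (jet u)"

definition tangent_jet :: "(real^('k + 'a) \<Rightarrow> real^'m) \<Rightarrow> real^('k::finite + 'a::finite)
                           \<Rightarrow> ('k, 'a, 'm::finite) jet set" where
  "tangent_jet u x0 = range (frechet_derivative (jet u) (at x0))"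

definition approx_solution :: "('m \<Rightarrow> 'a \<Rightarrow> ('k, 'a, 'm) farg \<Rightarrow> real) \<Rightarrow> ('k, 'a, 'm) farg set
     \<Rightarrow> (real^('k + 'a) \<Rightarrow> real^'m) \<Rightarrow> real^('k::finite + 'a::finite) \<Rightarrow> bool" where
  "approx_solution F U u x0 \<longleftrightarrow>
     (\<exists>S. open S \<and> x0 \<in> S \<and> (\<forall>A::'m::finite. real_analytic_on (\<lambda>x. u x $ A) S)) \<and>
     (\<exists>C \<delta>. \<delta> > 0 \<and> (\<forall>x\<in>ball x0 \<delta>.
        (x, u x, restrP (snd (snd (jet u x)))) \<in> U \<and>
        (\<forall>A \<alpha>. \<bar>snd (snd (jet u x)) $ A $ Inr \<alpha> - F A \<alpha> (x, u x, restrP (snd (snd (jet u x))))\<bar>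
                \<le> C * (\<Sum>i\<in>UNIV. \<bar>x $ i - x0 $ i\<bar> ^ 2))))"

end

theory Submission
  imports Defs
begin

text \<open>
  On the jet graph the fibre coordinates are p^A = u^A and p^A_i = \<partial>_i u^A, so a tangent vector at
  z_0 has the form (w, Du w, D^2u w). It is annihilated by the contact forms \<eta>^A, and any two of them
  by dp^A_i \<and> dx^i, since the Hessian of the real-analytic u^A is symmetric. Because u is an
  approximate solution, f^A_\<alpha> vanishes to second order along the jet graph at x_0, so both f^A_\<alpha>
  and df^A_\<alpha> vanish on the tangent space too. Every generator of the system, hence every form of the
  algebraic ideal, then vanishes on the tangent space: it is an integral element, and for the same
  reason it lies in the polar space of each of its subspaces. The symmetric second derivative comes
  from differentiating the power series of u^A twice term by term.
\<close>

section \<open>Multi-index power series\<close>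

definition multi_power :: "('e \<Rightarrow> nat) \<Rightarrow> 'e::euclidean_space \<Rightarrow> real" where
  "multi_power \<beta> h = (\<Prod>b\<in>Basis. (h \<bullet> b) ^ \<beta> b)"

definition multi_degree :: "('e::euclidean_space \<Rightarrow> nat) \<Rightarrow> nat" where
  "multi_degree \<beta> = (\<Sum>b\<in>Basis. \<beta> b)"

text \<open>\<open>\<beta> - multi_unit b\<close> is pointwise truncated subtraction; it only ever appears multiplied by
  \<open>\<beta> b\<close>, which vanishes exactly when the truncation takes effect.\<close>

definition multi_unit :: "'e \<Rightarrow> 'e \<Rightarrow> nat" where
  "multi_unit b = (\<lambda>c. if c = b then 1 else 0)"

definition multi_indices :: "('e::euclidean_space \<Rightarrow> nat) set" where
  "multi_indices = {\<beta>. \<forall>b. b \<notin> Basis \<longrightarrow> \<beta> b = 0}"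

lemma multi_power_minus_unit:
  assumes "b \<in> (Basis::'e::euclidean_space set)"
  shows "multi_power (\<beta> - multi_unit b) h = (h \<bullet> b) ^ (\<beta> b - 1) * (\<Prod>c\<in>Basis - {b}. (h \<bullet> c) ^ \<beta> c)"
proof -
  have "multi_power (\<beta> - multi_unit b) h
      = (h \<bullet> b) ^ ((\<beta> - multi_unit b) b) * (\<Prod>c\<in>Basis - {b}. (h \<bullet> c) ^ ((\<beta> - multi_unit b) c))"
    unfolding multi_power_def using assms by (simp add: prod.remove)
  also have "(\<Prod>c\<in>Basis - {b}. (h \<bullet> c) ^ ((\<beta> - multi_unit b) c)) = (\<Prod>c\<in>Basis - {b}. (h \<bullet> c) ^ \<beta> c)"
    by (rule prod.cong) (auto simp: multi_unit_def)
  finally show ?thesis by (simp add: multi_unit_def fun_diff_def)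
qed

lemma has_derivative_multi_power:
  "(multi_power \<beta> has_derivative
     (\<lambda>v. \<Sum>b\<in>Basis. (v \<bullet> b) * (real (\<beta> b) * multi_power (\<beta> - multi_unit b) h))) (at h)"
proof -
  have "((\<lambda>h. \<Prod>b\<in>Basis. (h \<bullet> b) ^ \<beta> b) has_derivative
     (\<lambda>v. \<Sum>b\<in>Basis. (of_nat (\<beta> b) * (v \<bullet> b) * (h \<bullet> b) ^ (\<beta> b - 1))
                       * (\<Prod>c\<in>Basis - {b}. (h \<bullet> c) ^ \<beta> c))) (at h)"
    by (intro has_derivative_prod has_derivative_power
        bounded_linear.has_derivative[OF bounded_linear_inner_left] has_derivative_ident)
  moreover have "(\<lambda>v. \<Sum>b\<in>Basis. (of_nat (\<beta> b) * (v \<bullet> b) * (h \<bullet> b) ^ (\<beta> b - 1))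
                       * (\<Prod>c\<in>Basis - {b}. (h \<bullet> c) ^ \<beta> c))
      = (\<lambda>v. \<Sum>b\<in>Basis. (v \<bullet> b) * (real (\<beta> b) * multi_power (\<beta> - multi_unit b) h))"
    by (intro ext sum.cong refl) (simp add: multi_power_minus_unit)
  ultimately show ?thesis unfolding multi_power_def[abs_def] by simp
qed

lemma abs_multi_power_le:
  assumes "\<And>b. b \<in> Basis \<Longrightarrow> \<bar>h \<bullet> b\<bar> \<le> \<rho>"
  shows "\<bar>multi_power \<beta> h\<bar> \<le> \<rho> ^ multi_degree \<beta>"
proof -
  have "\<bar>multi_power \<beta> h\<bar> = (\<Prod>b\<in>Basis. \<bar>h \<bullet> b\<bar> ^ \<beta> b)"
    by (simp add: multi_power_def abs_prod power_abs)
  also have "\<dots> \<le> (\<Prod>b\<in>Basis. \<rho> ^ \<beta> b)"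
    by (intro prod_mono) (auto intro: power_mono assms)
  also have "\<dots> = \<rho> ^ multi_degree \<beta>" by (simp add: multi_degree_def power_sum)
  finally show ?thesis .
qed

lemma multi_degree_minus_unit:
  assumes "b \<in> (Basis::'e::euclidean_space set)" "\<beta> b \<ge> 1"
  shows "multi_degree (\<beta> - multi_unit b) = multi_degree \<beta> - 1"
proof -
  have "multi_degree (\<beta> - multi_unit b) = (\<beta> b - 1) + (\<Sum>c\<in>Basis - {b}. (\<beta> - multi_unit b) c)"
    unfolding multi_degree_def using assms by (simp add: sum.remove multi_unit_def)
  also have "(\<Sum>c\<in>Basis - {b}. (\<beta> - multi_unit b) c) = (\<Sum>c\<in>Basis - {b}. \<beta> c)"
    by (rule sum.cong) (auto simp: multi_unit_def)
  moreover have "multi_degree \<beta> = \<beta> b + (\<Sum>c\<in>Basis - {b}. \<beta> c)"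
    unfolding multi_degree_def using assms by (simp add: sum.remove)
  ultimately show ?thesis using assms by simp
qed

lemma le_multi_degree: "b \<in> Basis \<Longrightarrow> \<beta> b \<le> multi_degree \<beta>"
  unfolding multi_degree_def by (rule member_le_sum) auto

lemma index_mult_power_minus_unit_le:
  assumes "b \<in> (Basis::'e::euclidean_space set)" "0 \<le> \<rho>"
  shows "real (\<beta> b) * \<rho> ^ multi_degree (\<beta> - multi_unit b)
           \<le> real (multi_degree \<beta>) * \<rho> ^ (multi_degree \<beta> - 1)"
proof (cases "\<beta> b = 0")
  case False
  then show ?thesis
    using multi_degree_minus_unit[OF assms(1)] le_multi_degree[OF assms(1), of \<beta>] assms
    by (simp add: mult_right_mono)
qed (use assms in simp)

lemma abs_partial_multi_power_le:
  assumes "b \<in> (Basis::'e::euclidean_space set)" "\<And>c. c \<in> Basis \<Longrightarrow> \<bar>h \<bullet> c\<bar> \<le> \<rho>"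
  shows "\<bar>real (\<beta> b) * multi_power (\<beta> - multi_unit b) h\<bar>
           \<le> real (multi_degree \<beta>) * \<rho> ^ (multi_degree \<beta> - 1)"
proof -
  have "0 \<le> \<rho>" using assms(2)[OF assms(1)] by linarith
  have "\<bar>real (\<beta> b) * multi_power (\<beta> - multi_unit b) h\<bar>
          \<le> real (\<beta> b) * \<rho> ^ multi_degree (\<beta> - multi_unit b)"
    by (simp add: abs_mult mult_left_mono abs_multi_power_le assms)
  also have "\<dots> \<le> real (multi_degree \<beta>) * \<rho> ^ (multi_degree \<beta> - 1)"
    by (rule index_mult_power_minus_unit_le[OF assms(1) \<open>0 \<le> \<rho>\<close>])
  finally show ?thesis .
qed

lemma abs_derivative_multi_power_le:
  assumes "\<And>c. c \<in> Basis \<Longrightarrow> \<bar>(h::'e::euclidean_space) \<bullet> c\<bar> \<le> \<rho>"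
  shows "\<bar>\<Sum>b\<in>Basis. (v \<bullet> b) * (real (\<beta> b) * multi_power (\<beta> - multi_unit b) h)\<bar>
           \<le> real DIM('e) * (real (multi_degree \<beta>) * \<rho> ^ (multi_degree \<beta> - 1)) * norm v"
proof -
  have "\<bar>\<Sum>b\<in>Basis. (v \<bullet> b) * (real (\<beta> b) * multi_power (\<beta> - multi_unit b) h)\<bar>
          \<le> (\<Sum>b\<in>(Basis::'e set). \<bar>v \<bullet> b\<bar> * \<bar>real (\<beta> b) * multi_power (\<beta> - multi_unit b) h\<bar>)"
    unfolding abs_mult[symmetric] by (rule sum_abs)
  also have "\<dots> \<le> (\<Sum>b\<in>(Basis::'e set). norm v * (real (multi_degree \<beta>) * \<rho> ^ (multi_degree \<beta> - 1)))"
    by (intro sum_mono mult_mono Basis_le_norm abs_partial_multi_power_le assms) auto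
  finally show ?thesis by (simp add: mult_ac)
qed

lemma ball_component_le: "x \<in> ball y \<rho> \<Longrightarrow> c \<in> Basis \<Longrightarrow> \<bar>(x - y) \<bullet> c\<bar> \<le> \<rho>"
  by (metis Basis_le_norm dist_norm dist_commute less_eq_real_def mem_ball order_trans)

lemma countable_multi_indices: "countable (multi_indices :: ('e::euclidean_space \<Rightarrow> nat) set)"
proof -
  have "multi_indices \<subseteq> (\<lambda>f b. if b \<in> Basis then f b else 0) ` (PiE (Basis::'e set) (\<lambda>_. UNIV::nat set))"
  proof
    fix \<beta> :: "'e \<Rightarrow> nat" assume "\<beta> \<in> multi_indices"
    then have "\<beta> = (\<lambda>b. if b \<in> Basis then restrict \<beta> Basis b else 0)"
      by (auto simp: multi_indices_def)
    moreover have "restrict \<beta> Basis \<in> PiE Basis (\<lambda>_. UNIV)" by simp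
    ultimately show "\<beta> \<in> (\<lambda>f b. if b \<in> Basis then f b else 0) ` (PiE (Basis::'e set) (\<lambda>_. UNIV))"
      by blast
  qed
  moreover have "countable (PiE (Basis::'e set) (\<lambda>_. UNIV::nat set))"
    by (rule countable_PiE) auto
  ultimately show ?thesis by (meson countable_image countable_subset)
qed

lemma infinite_multi_indices: "infinite (multi_indices :: ('e::euclidean_space \<Rightarrow> nat) set)"
proof
  assume fin: "finite (multi_indices :: ('e \<Rightarrow> nat) set)"
  obtain b :: 'e where b: "b \<in> Basis" using nonempty_Basis by blast
  have "inj (\<lambda>k c. if c = b then k else (0::nat))" by (auto simp: inj_def fun_eq_iff)
  moreover have "range (\<lambda>k c. if c = b then k else (0::nat)) \<subseteq> multi_indices"
    using b by (auto simp: multi_indices_def)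
  ultimately show False using fin range_inj_infinite finite_subset by blast
qed

lemma abs_suminf_le_scaled:
  fixes a B :: "nat \<Rightarrow> real"
  assumes "summable B" "\<And>n. \<bar>a n\<bar> \<le> B n * c"
  shows "\<bar>\<Sum>n. a n\<bar> \<le> (\<Sum>n. B n) * c"
proof -
  have summ: "summable (\<lambda>n. B n * c)" using assms(1) by (rule summable_mult2)
  have "\<bar>\<Sum>n. a n\<bar> \<le> (\<Sum>n. \<bar>a n\<bar>)"
    by (rule summable_rabs) (rule summable_comparison_test'[OF summ], use assms(2) in auto)
  also have "\<dots> \<le> (\<Sum>n. B n * c)"
    by (rule suminf_le) (use assms(2) summ in \<open>auto intro: summable_comparison_test'[OF summ]\<close>)
  finally show ?thesis using assms(1) by (simp add: suminf_mult2)
qed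

lemma has_derivative_suminf:
  fixes T :: "nat \<Rightarrow> 'a::real_normed_vector \<Rightarrow> real"
  assumes S: "convex S" "open S"
    and der: "\<And>n x. x \<in> S \<Longrightarrow> (T n has_derivative T' n x) (at x)"
    and bnd: "\<And>n x v. x \<in> S \<Longrightarrow> \<bar>T' n x v\<bar> \<le> B n * norm v"
    and B0: "\<And>n. 0 \<le> B n"
    and sB: "summable B"
    and sT: "\<And>x. x \<in> S \<Longrightarrow> summable (\<lambda>n. T n x)"
    and x: "x \<in> S"
  shows "((\<lambda>x. \<Sum>n. T n x) has_derivative (\<lambda>v. \<Sum>n. T' n x v)) (at x)"
proof -
  have sT': "summable (\<lambda>n. T' n x v)" if "x \<in> S" for x v
    by (rule summable_comparison_test'[where g="\<lambda>n. B n * norm v"])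
       (use bnd[OF that] sB in \<open>auto intro: summable_mult2\<close>)
  have "\<exists>g. \<forall>x\<in>S. (\<lambda>n. T n x) sums (g x) \<and> (g has_derivative (\<lambda>v. \<Sum>n. T' n x v)) (at x within S)"
  proof (rule has_derivative_series[OF S(1) _ _ x])
    show "((T n) has_derivative (T' n x)) (at x within S)" if "x \<in> S" for n x
      using der[OF that] by (rule has_derivative_at_withinI)
    show "(\<lambda>n. T n x) sums (\<Sum>n. T n x)" using sT[OF x] by (rule summable_sums)
    fix e :: real assume e: "e > 0"
    obtain N where N: "\<And>n. n \<ge> N \<Longrightarrow> norm (\<Sum>i. B (i + n)) < e"
      using suminf_exist_split[OF e sB] by blast
    show "\<forall>\<^sub>F n in sequentially. \<forall>x\<in>S. \<forall>h. norm ((\<Sum>i<n. T' i x h) - (\<Sum>n. T' n x h)) \<le> e * norm h"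
      unfolding eventually_sequentially
    proof (intro exI allI impI ballI)
      fix n x h assume n: "N \<le> n" and xS: "x \<in> S"
      have "(\<Sum>i<n. T' i x h) - (\<Sum>n. T' n x h) = - (\<Sum>i. T' (i + n) x h)"
        using suminf_minus_initial_segment[OF sT'[OF xS], of n] by simp
      then have "norm ((\<Sum>i<n. T' i x h) - (\<Sum>n. T' n x h)) = \<bar>\<Sum>i. T' (i + n) x h\<bar>" by simp
      also have "\<dots> \<le> (\<Sum>i. B (i + n)) * norm h"
        using summable_ignore_initial_segment[OF sB, of n] bnd[OF xS] by (rule abs_suminf_le_scaled)
      also have "\<dots> \<le> e * norm h"
        using N[OF n] by (intro mult_right_mono) auto
      finally show "norm ((\<Sum>i<n. T' i x h) - (\<Sum>n. T' n x h)) \<le> e * norm h" .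
    qed
  qed
  then obtain g where g: "\<And>x. x \<in> S \<Longrightarrow> (\<lambda>n. T n x) sums (g x)"
    "\<And>x. x \<in> S \<Longrightarrow> (g has_derivative (\<lambda>v. \<Sum>n. T' n x v)) (at x within S)" by blast
  have "(g has_derivative (\<lambda>v. \<Sum>n. T' n x v)) (at x)"
    using g(2)[OF x] at_within_open[OF x S(2)] by simp
  then show ?thesis
    by (rule has_derivative_transform_within_open[OF _ S(2) x]) (use g(1) sums_unique in auto)
qed

lemma summable_times_degree_power:
  fixes d :: "nat \<Rightarrow> real" and k :: "nat \<Rightarrow> nat"
  assumes summ: "summable (\<lambda>n. \<bar>d n\<bar> * R ^ k n)" and "0 < \<rho>" "2 * \<rho> \<le> R"
  shows "summable (\<lambda>n. \<bar>d n\<bar> * real (k n) * \<rho> ^ (k n - 1))"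
proof (rule summable_comparison_test'[OF summable_divide[OF summ, of \<rho>]])
  fix n
  have "real j * \<rho> ^ (j - 1) \<le> R ^ j / \<rho>" for j
  proof (cases j)
    case (Suc i)
    have "real j \<le> 2 ^ j"
      using less_exp[of j] by (metis less_imp_le of_nat_le_iff of_nat_numeral of_nat_power)
    then have "real j * \<rho> ^ j \<le> 2 ^ j * \<rho> ^ j"
      using \<open>0 < \<rho>\<close> by (intro mult_right_mono) auto
    also have "\<dots> = (2 * \<rho>) ^ j" by (simp add: power_mult_distrib)
    also have "\<dots> \<le> R ^ j" using assms by (intro power_mono) auto
    finally have "real j * \<rho> ^ j \<le> R ^ j" .
    moreover have "real j * \<rho> ^ j = real j * \<rho> ^ (j - 1) * \<rho>" using Suc by simp
    ultimately show ?thesis using \<open>0 < \<rho>\<close> by (simp add: pos_le_divide_eq)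
  qed (use assms in simp)
  then have "\<bar>d n\<bar> * (real (k n) * \<rho> ^ (k n - 1)) \<le> \<bar>d n\<bar> * (R ^ k n / \<rho>)"
    by (intro mult_left_mono) auto
  then show "norm (\<bar>d n\<bar> * real (k n) * \<rho> ^ (k n - 1)) \<le> \<bar>d n\<bar> * R ^ k n / \<rho>"
    using \<open>0 < \<rho>\<close> by (simp add: abs_mult mult.assoc)
qed

lemma summable_partial_multi_power_series:
  fixes d :: "nat \<Rightarrow> real" and \<kappa> :: "nat \<Rightarrow> 'e::euclidean_space \<Rightarrow> nat"
  assumes summ: "summable (\<lambda>n. \<bar>d n\<bar> * real (multi_degree (\<kappa> n)) * \<rho> ^ (multi_degree (\<kappa> n) - 1))"
    and b: "b \<in> Basis" and x: "x \<in> ball y \<rho>"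
  shows "summable (\<lambda>n. d n * real (\<kappa> n b) * multi_power (\<kappa> n - multi_unit b) (x - y))"
proof (rule summable_comparison_test'[OF summ])
  fix n
  have "\<bar>real (\<kappa> n b) * multi_power (\<kappa> n - multi_unit b) (x - y)\<bar>
          \<le> real (multi_degree (\<kappa> n)) * \<rho> ^ (multi_degree (\<kappa> n) - 1)"
    by (rule abs_partial_multi_power_le[OF b ball_component_le[OF x]])
  then show "norm (d n * real (\<kappa> n b) * multi_power (\<kappa> n - multi_unit b) (x - y))
               \<le> \<bar>d n\<bar> * real (multi_degree (\<kappa> n)) * \<rho> ^ (multi_degree (\<kappa> n) - 1)"
    by (simp add: abs_mult mult.assoc mult_left_mono)
qed

lemma has_derivative_multi_power_series:
  fixes d :: "nat \<Rightarrow> real" and \<kappa> :: "nat \<Rightarrow> 'e::euclidean_space \<Rightarrow> nat"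
  assumes summ: "summable (\<lambda>n. \<bar>d n\<bar> * R ^ multi_degree (\<kappa> n))"
    and \<rho>: "0 < \<rho>" "2 * \<rho> \<le> R" and x: "x \<in> ball y \<rho>"
  shows "((\<lambda>x. \<Sum>n. d n * multi_power (\<kappa> n) (x - y)) has_derivative
          (\<lambda>v. \<Sum>b\<in>Basis. (v \<bullet> b) *
                 (\<Sum>n. d n * real (\<kappa> n b) * multi_power (\<kappa> n - multi_unit b) (x - y)))) (at x)"
proof -
  define T where "T n x = d n * multi_power (\<kappa> n) (x - y)" for n x
  define T' where "T' n x v = d n * (\<Sum>b\<in>Basis. (v \<bullet> b) *
                     (real (\<kappa> n b) * multi_power (\<kappa> n - multi_unit b) (x - y)))" for n x v
  define B where "B n = real DIM('e) * (\<bar>d n\<bar> * real (multi_degree (\<kappa> n)) * \<rho> ^ (multi_degree (\<kappa> n) - 1))" for n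
  have summ_deg: "summable (\<lambda>n. \<bar>d n\<bar> * real (multi_degree (\<kappa> n)) * \<rho> ^ (multi_degree (\<kappa> n) - 1))"
    by (rule summable_times_degree_power[OF summ \<rho>])
  note summ_partial = summable_partial_multi_power_series[OF summ_deg _ x]
  have "((\<lambda>x. \<Sum>n. T n x) has_derivative (\<lambda>v. \<Sum>n. T' n x v)) (at x)"
  proof (rule has_derivative_suminf[where S="ball y \<rho>" and B=B])
    show "(T n has_derivative T' n z) (at z)" for n z
      unfolding T_def[abs_def] T'_def
      by (intro has_derivative_mult_right
          has_derivative_compose[OF _ has_derivative_multi_power, of "\<lambda>x. x - y", unfolded o_def])
         (auto intro!: derivative_eq_intros)
  next
    fix n z v assume z: "z \<in> ball y \<rho>"
    have "\<bar>T' n z v\<bar> = \<bar>d n\<bar> * \<bar>\<Sum>b\<in>Basis. (v \<bullet> b) *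
             (real (\<kappa> n b) * multi_power (\<kappa> n - multi_unit b) (z - y))\<bar>"
      by (simp add: T'_def abs_mult)
    also have "\<dots> \<le> \<bar>d n\<bar> * (real DIM('e) * (real (multi_degree (\<kappa> n))
                       * \<rho> ^ (multi_degree (\<kappa> n) - 1)) * norm v)"
      by (intro mult_left_mono abs_derivative_multi_power_le ball_component_le[OF z]) auto
    also have "\<dots> = B n * norm v" by (simp add: B_def)
    finally show "\<bar>T' n z v\<bar> \<le> B n * norm v" .
  next
    show "0 \<le> B n" for n using \<rho> by (simp add: B_def)
    show "summable B" unfolding B_def by (rule summable_mult[OF summ_deg])
    show "summable (\<lambda>n. T n z)" if z: "z \<in> ball y \<rho>" for z
    proof (rule summable_comparison_test'[OF summ])
      fix n
      have "\<bar>multi_power (\<kappa> n) (z - y)\<bar> \<le> \<rho> ^ multi_degree (\<kappa> n)"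
        by (rule abs_multi_power_le[OF ball_component_le[OF z]])
      also have "\<dots> \<le> R ^ multi_degree (\<kappa> n)"
        using \<rho> by (intro power_mono) auto
      finally have "\<bar>multi_power (\<kappa> n) (z - y)\<bar> \<le> R ^ multi_degree (\<kappa> n)" .
      then show "norm (T n z) \<le> \<bar>d n\<bar> * R ^ multi_degree (\<kappa> n)"
        unfolding T_def by (simp add: abs_mult mult_left_mono)
    qed
  qed (use x in auto)
  moreover have "(\<Sum>n. T' n x v) = (\<Sum>b\<in>Basis. (v \<bullet> b) *
                   (\<Sum>n. d n * real (\<kappa> n b) * multi_power (\<kappa> n - multi_unit b) (x - y)))" for v
  proof -
    have "(\<Sum>n. T' n x v) = (\<Sum>n. \<Sum>b\<in>Basis. (v \<bullet> b) *
            (d n * real (\<kappa> n b) * multi_power (\<kappa> n - multi_unit b) (x - y)))"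
      unfolding T'_def by (simp add: sum_distrib_left mult_ac)
    also have "\<dots> = (\<Sum>b\<in>Basis. \<Sum>n. (v \<bullet> b) *
            (d n * real (\<kappa> n b) * multi_power (\<kappa> n - multi_unit b) (x - y)))"
      by (rule suminf_sum) (auto intro: summable_mult summ_partial)
    finally show ?thesis by (simp add: suminf_mult summ_partial)
  qed
  ultimately show ?thesis unfolding T_def by simp
qed

lemma multi_power_series_second_derivative:
  fixes c :: "nat \<Rightarrow> real" and \<kappa> :: "nat \<Rightarrow> 'e::euclidean_space \<Rightarrow> nat"
  assumes summ: "summable (\<lambda>n. \<bar>c n\<bar> * R ^ multi_degree (\<kappa> n))" and R: "0 < R"
  obtains Q :: "'e \<Rightarrow> 'e \<Rightarrow> real" and K :: "'e \<Rightarrow> 'e \<Rightarrow> real"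
  where "\<And>x. x \<in> ball y (R / 2) \<Longrightarrow> ((\<lambda>x. \<Sum>n. c n * multi_power (\<kappa> n) (x - y)) has_derivative
            (\<lambda>v. \<Sum>b\<in>Basis. (v \<bullet> b) * Q b x)) (at x)"
    "\<And>b. b \<in> Basis \<Longrightarrow> (Q b has_derivative (\<lambda>v. \<Sum>a\<in>Basis. (v \<bullet> a) * K b a)) (at y)"
    "\<And>a b. K a b = K b a"
proof
  define Q where "Q b x = (\<Sum>n. c n * real (\<kappa> n b) * multi_power (\<kappa> n - multi_unit b) (x - y))" for b x
  define K where "K b a = (\<Sum>n. c n * real (\<kappa> n b) * real ((\<kappa> n - multi_unit b) a)
                      * multi_power (\<kappa> n - multi_unit b - multi_unit a) 0)" for b a
  show "((\<lambda>x. \<Sum>n. c n * multi_power (\<kappa> n) (x - y)) has_derivative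
          (\<lambda>v. \<Sum>b\<in>Basis. (v \<bullet> b) * Q b x)) (at x)" if "x \<in> ball y (R / 2)" for x
    unfolding Q_def using R that by (intro has_derivative_multi_power_series[OF summ, of "R / 2"]) auto
  show "(Q b has_derivative (\<lambda>v. \<Sum>a\<in>Basis. (v \<bullet> a) * K b a)) (at y)" if b: "b \<in> Basis" for b
  proof -
    have "summable (\<lambda>n. \<bar>c n * real (\<kappa> n b)\<bar> * (R / 2) ^ multi_degree (\<kappa> n - multi_unit b))"
    proof (rule summable_comparison_test'[OF summable_times_degree_power[OF summ, of "R / 2"]])
      fix n
      have "real (\<kappa> n b) * (R / 2) ^ multi_degree (\<kappa> n - multi_unit b)
              \<le> real (multi_degree (\<kappa> n)) * (R / 2) ^ (multi_degree (\<kappa> n) - 1)"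
        by (rule index_mult_power_minus_unit_le[OF b]) (use R in simp)
      then show "norm (\<bar>c n * real (\<kappa> n b)\<bar> * (R / 2) ^ multi_degree (\<kappa> n - multi_unit b))
                   \<le> \<bar>c n\<bar> * real (multi_degree (\<kappa> n)) * (R / 2) ^ (multi_degree (\<kappa> n) - 1)"
        using R by (simp add: abs_mult mult.assoc mult_left_mono)
    qed (use R in auto)
    from has_derivative_multi_power_series[OF this, of "R / 4" y y] R
    show ?thesis unfolding Q_def[abs_def] K_def by (simp add: mult.assoc)
  qed
  show "K a b = K b a" for a b
  proof -
    have "real (\<beta> a) * real ((\<beta> - multi_unit a) b) = real (\<beta> b) * real ((\<beta> - multi_unit b) a)
          \<and> \<beta> - multi_unit a - multi_unit b = \<beta> - multi_unit b - multi_unit a" for \<beta> :: "'e \<Rightarrow> nat"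
      by (cases "a = b") (auto simp: multi_unit_def fun_diff_def fun_eq_iff)
    then show ?thesis unfolding K_def by (simp add: mult.assoc)
  qed
qed

lemma multi_power_series_abs_summable:
  fixes c :: "nat \<Rightarrow> real" and \<kappa> :: "nat \<Rightarrow> 'e::euclidean_space \<Rightarrow> nat"
  assumes "((\<lambda>n. c n * multi_power (\<kappa> n) h) has_sum s) UNIV"
    and "\<And>b. b \<in> Basis \<Longrightarrow> h \<bullet> b = R" and "0 \<le> R"
  shows "summable (\<lambda>n. \<bar>c n\<bar> * R ^ multi_degree (\<kappa> n))"
proof -
  have "((\<lambda>n. c n * R ^ multi_degree (\<kappa> n)) has_sum s) UNIV"
    using assms(1) by (simp add: multi_power_def assms(2) multi_degree_def power_sum)
  then have "(\<lambda>n. norm (c n * R ^ multi_degree (\<kappa> n))) summable_on UNIV"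
    by (intro summable_on_iff_abs_summable_on_real[THEN iffD1] has_sum_imp_summable)
  then have "summable (\<lambda>n. norm (c n * R ^ multi_degree (\<kappa> n)))"
    by (rule summable_on_imp_summable)
  then show ?thesis using assms(3) by (simp add: abs_mult)
qed

lemma real_analytic_on_power_series_expansion:
  fixes f :: "'e::euclidean_space \<Rightarrow> real"
  assumes "real_analytic_on f S" "y \<in> S"
  obtains R and c :: "nat \<Rightarrow> real" and \<kappa> :: "nat \<Rightarrow> 'e \<Rightarrow> nat"
  where "0 < R" "summable (\<lambda>n. \<bar>c n\<bar> * R ^ multi_degree (\<kappa> n))"
    "\<And>x. x \<in> ball y R \<Longrightarrow> f x = (\<Sum>n. c n * multi_power (\<kappa> n) (x - y))"
proof -
  obtain a :: "('e \<Rightarrow> nat) \<Rightarrow> real" and r where "r > 0" and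
    expansion: "\<And>x. x \<in> ball y r \<Longrightarrow> ((\<lambda>\<beta>. a \<beta> * multi_power \<beta> (x - y)) has_sum f x) multi_indices"
    using assms unfolding real_analytic_on_def multi_power_def[abs_def] multi_indices_def by blast
  define \<kappa> where "\<kappa> = from_nat_into (multi_indices :: ('e \<Rightarrow> nat) set)"
  have bij: "bij_betw \<kappa> UNIV multi_indices"
    unfolding \<kappa>_def by (rule bij_betw_from_nat_into[OF countable_multi_indices infinite_multi_indices])
  have expansion_nat: "((\<lambda>n. a (\<kappa> n) * multi_power (\<kappa> n) (x - y)) has_sum f x) UNIV"
    if "x \<in> ball y r" for x
    using expansion[OF that] has_sum_reindex_bij_betw[OF bij, of "\<lambda>\<beta>. a \<beta> * multi_power \<beta> (x - y)"]
    by simp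
  define R where "R = r / (2 * real DIM('e))"
  have "0 < R" using \<open>r > 0\<close> by (simp add: R_def)
  have "R \<le> r / 2" unfolding R_def using \<open>r > 0\<close>
    by (intro divide_left_mono) (auto simp: DIM_positive)
  \<comment> \<open>Convergence at the corner y + (R, \<dots>, R) is absolute, and it dominates the whole series.\<close>
  define corner where "corner = (\<Sum>b\<in>(Basis::'e set). R *\<^sub>R b)"
  have corner_component: "corner \<bullet> b = R" if "b \<in> Basis" for b
  proof -
    have "corner \<bullet> b = (\<Sum>c\<in>(Basis::'e set). if c = b then R else 0)"
      unfolding corner_def inner_sum_left by (rule sum.cong) (auto simp: inner_Basis that)
    then show ?thesis using that by simp
  qed
  have "norm corner \<le> (\<Sum>b\<in>(Basis::'e set). norm (R *\<^sub>R b))" unfolding corner_def by (rule norm_sum)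
  also have "\<dots> = real DIM('e) * R" using \<open>0 < R\<close> by simp
  also have "\<dots> < r" using \<open>r > 0\<close> by (simp add: R_def)
  finally have "y + corner \<in> ball y r" by (simp add: dist_norm)
  then have "((\<lambda>n. a (\<kappa> n) * multi_power (\<kappa> n) corner) has_sum f (y + corner)) UNIV"
    using expansion_nat by fastforce
  from multi_power_series_abs_summable[OF this corner_component] \<open>0 < R\<close>
  have "summable (\<lambda>n. \<bar>a (\<kappa> n)\<bar> * R ^ multi_degree (\<kappa> n))" by simp
  moreover have "f x = (\<Sum>n. a (\<kappa> n) * multi_power (\<kappa> n) (x - y))" if "x \<in> ball y R" for x
  proof -
    have "x \<in> ball y r" using that \<open>R \<le> r / 2\<close> \<open>r > 0\<close> by auto
    then show ?thesis using expansion_nat has_sum_imp_sums sums_unique by blast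
  qed
  ultimately show ?thesis using that[of R "\<lambda>n. a (\<kappa> n)" \<kappa>] \<open>0 < R\<close> by blast
qed

lemma real_analytic_on_second_derivative:
  fixes f :: "'e::euclidean_space \<Rightarrow> real"
  assumes "real_analytic_on f S" "y \<in> S"
  obtains \<rho> H where "0 < \<rho>" "\<And>x. x \<in> ball y \<rho> \<Longrightarrow> f differentiable (at x)"
    "\<And>a. ((\<lambda>x. frechet_derivative f (at x) a) has_derivative H a) (at y)"
    "\<And>a b. H a b = H b a"
proof -
  obtain R and c :: "nat \<Rightarrow> real" and \<kappa> where R: "0 < R"
    and summ: "summable (\<lambda>n. \<bar>c n\<bar> * R ^ multi_degree (\<kappa> n))"
    and f_eq: "\<And>x. x \<in> ball y R \<Longrightarrow> f x = (\<Sum>n. c n * multi_power (\<kappa> n) (x - y))"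
    using real_analytic_on_power_series_expansion[OF assms] by metis
  obtain Q K where
    series_deriv: "\<And>x. x \<in> ball y (R / 2) \<Longrightarrow> ((\<lambda>x. \<Sum>n. c n * multi_power (\<kappa> n) (x - y))
        has_derivative (\<lambda>v. \<Sum>b\<in>Basis. (v \<bullet> b) * Q b x)) (at x)"
    and Q_deriv: "\<And>b. b \<in> Basis \<Longrightarrow> (Q b has_derivative (\<lambda>v. \<Sum>a\<in>Basis. (v \<bullet> a) * K b a)) (at y)"
    and K_sym: "\<And>a b. K a b = K b a"
    using multi_power_series_second_derivative[OF summ R, where y = y] by blast
  have f_deriv: "(f has_derivative (\<lambda>v. \<Sum>b\<in>Basis. (v \<bullet> b) * Q b x)) (at x)"
    if x: "x \<in> ball y (R / 2)" for x
    by (rule has_derivative_transform_within_open[OF series_deriv[OF x] open_ball x])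
       (use R in \<open>simp add: f_eq\<close>)
  have fd_eq: "frechet_derivative f (at x) a = (\<Sum>b\<in>Basis. (a \<bullet> b) * Q b x)"
    if "x \<in> ball y (R / 2)" for x a
    by (simp add: frechet_derivative_at[OF f_deriv[OF that], symmetric])
  define H where "H a v = (\<Sum>b\<in>Basis. (a \<bullet> b) * (\<Sum>c\<in>Basis. (v \<bullet> c) * K b c))" for a v
  show ?thesis
  proof (rule that)
    show "0 < R / 2" using R by simp
    show "f differentiable (at x)" if "x \<in> ball y (R / 2)" for x
      using f_deriv[OF that] by (rule differentiableI)
  next
    fix a
    have "((\<lambda>x. \<Sum>b\<in>Basis. (a \<bullet> b) * Q b x) has_derivative H a) (at y)"
      unfolding H_def[abs_def]
      by (intro has_derivative_sum has_derivative_mult_right Q_deriv) simp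
    then show "((\<lambda>x. frechet_derivative f (at x) a) has_derivative H a) (at y)"
      by (rule has_derivative_transform_within_open[where s = "ball y (R / 2)"])
         (use R fd_eq in auto)
  next
    fix a b
    have "H a b = (\<Sum>d\<in>Basis. \<Sum>e\<in>Basis. (a \<bullet> d) * (b \<bullet> e) * K d e)"
      by (simp add: H_def sum_distrib_left mult_ac)
    also have "\<dots> = (\<Sum>e\<in>Basis. \<Sum>d\<in>Basis. (a \<bullet> d) * (b \<bullet> e) * K d e)"
      by (rule sum.swap)
    also have "\<dots> = (\<Sum>e\<in>Basis. \<Sum>d\<in>Basis. (a \<bullet> d) * (b \<bullet> e) * K e d)"
      by (simp only: K_sym)
    also have "\<dots> = H b a"
      by (simp add: H_def sum_distrib_left mult_ac)
    finally show "H a b = H b a" .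
  qed
qed

section \<open>Algebraic ideals of forms\<close>

lemma alg_ideal_vanishes:
  assumes "(p, \<phi>) \<in> alg_ideal G"
    and gens: "\<And>q \<psi> ws. (q, \<psi>) \<in> G \<Longrightarrow> length ws = q \<Longrightarrow> set ws \<subseteq> E \<Longrightarrow> \<psi> z ws = 0"
    and "length vs = p" "set vs \<subseteq> E"
  shows "\<phi> z vs = 0"
  using assms(1,3,4)
proof (induction "(p, \<phi>)" arbitrary: p \<phi> vs rule: alg_ideal.induct)
  case gen
  then show ?case using gens by blast
next
  case (wedge_left p \<omega> q \<gamma>)
  have "\<omega> z (map (\<lambda>j. vs ! \<sigma> (q + j)) [0..<p]) = 0" if \<sigma>: "\<sigma> permutes {..<q + p}" for \<sigma>
  proof (rule wedge_left.hyps(2))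
    have "\<sigma> (q + j) < length vs" if "j < p" for j
      using permutes_in_image[OF \<sigma>] that wedge_left.prems(1) by auto
    then show "set (map (\<lambda>j. vs ! \<sigma> (q + j)) [0..<p]) \<subseteq> E"
      using wedge_left.prems(2) by (auto dest: nth_mem)
  qed simp
  then show ?case by (simp add: wedge_def)
next
  case (add p \<omega>1 \<omega>2)
  then show ?case by simp
qed

lemma integral_element_alg_ideal:
  assumes "subspace E"
    and "\<And>q \<psi> ws. (q, \<psi>) \<in> G \<Longrightarrow> length ws = q \<Longrightarrow> set ws \<subseteq> E \<Longrightarrow> \<psi> z ws = 0"
  shows "integral_element (alg_ideal G) z E"
  unfolding integral_element_def using assms alg_ideal_vanishes[of _ _ G E z] by blast

lemma integral_element_subset_Hpolar:
  assumes "integral_element I z T" "set es \<subseteq> T"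
  shows "T \<subseteq> Hpolar I z es"
  using assms unfolding integral_element_def Hpolar_def by auto

section \<open>Jets of approximate solutions\<close>

lemma has_derivative_vec_componentwise:
  fixes f :: "'a::real_normed_vector \<Rightarrow> 'b::euclidean_space ^ 'n::finite"
  assumes "\<And>i. ((\<lambda>x. f x $ i) has_derivative (\<lambda>v. f' v $ i)) (at x within S)"
  shows "(f has_derivative f') (at x within S)"
proof (rule has_derivative_componentwise_within[THEN iffD2], rule ballI)
  fix b :: "'b ^ 'n" assume "b \<in> Basis"
  then obtain i c where b: "b = axis i c" "c \<in> Basis" unfolding Basis_vec_def by blast
  have "((\<lambda>x. f x $ i \<bullet> c) has_derivative (\<lambda>v. f' v $ i \<bullet> c)) (at x within S)"
    using has_derivative_componentwise_within[THEN iffD1, OF assms[of i]] b(2) by blast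
  then show "((\<lambda>x. f x \<bullet> b) has_derivative (\<lambda>x. f' x \<bullet> b)) (at x within S)"
    unfolding b(1) inner_axis .
qed

lemma linear_vec_expansion:
  fixes f :: "real ^ 'n::finite \<Rightarrow> real"
  assumes "linear f"
  shows "f w = (\<Sum>i\<in>UNIV. w $ i * f (axis i 1))"
proof -
  have "f w = f (\<Sum>i\<in>UNIV. w $ i *\<^sub>R axis i 1)"
    by (simp add: basis_expansion flip: scalar_mult_eq_scaleR)
  then show ?thesis by (simp add: linear_sum[OF assms] linear_scale[OF assms])
qed

lemma quadratic_bound_imp_flat:
  fixes \<phi> :: "'a::real_normed_vector \<Rightarrow> real"
  assumes "\<delta> > 0" and bound: "\<And>x. x \<in> ball x0 \<delta> \<Longrightarrow> \<bar>\<phi> x\<bar> \<le> C * norm (x - x0) ^ 2"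
  shows "\<phi> x0 = 0" and "(\<phi> has_derivative (\<lambda>_. 0)) (at x0)"
proof -
  show "\<phi> x0 = 0" using bound[of x0] \<open>\<delta> > 0\<close> by simp
  show "(\<phi> has_derivative (\<lambda>_. 0)) (at x0)"
    unfolding has_derivative_at_alt
  proof (intro conjI allI impI)
    fix e :: real assume "e > 0"
    define d where "d = min \<delta> (e / (\<bar>C\<bar> + 1))"
    have "d > 0" using \<open>\<delta> > 0\<close> \<open>e > 0\<close> by (simp add: d_def)
    moreover have "\<bar>\<phi> y\<bar> \<le> e * norm (y - x0)" if y: "norm (y - x0) < d" for y
    proof -
      have "y \<in> ball x0 \<delta>" using y by (simp add: d_def dist_norm norm_minus_commute)
      have "\<bar>C\<bar> * norm (y - x0) \<le> \<bar>C\<bar> * (e / (\<bar>C\<bar> + 1))"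
        using y by (intro mult_left_mono) (auto simp: d_def)
      also have "\<dots> \<le> e" using \<open>e > 0\<close> by (simp add: field_simps)
      finally have "\<bar>C\<bar> * norm (y - x0) \<le> e" .
      have "\<bar>\<phi> y\<bar> \<le> C * norm (y - x0) ^ 2" by (rule bound[OF \<open>y \<in> ball x0 \<delta>\<close>])
      also have "\<dots> \<le> \<bar>C\<bar> * norm (y - x0) * norm (y - x0)"
        by (simp add: power2_eq_square mult.assoc mult_right_mono)
      also have "\<dots> \<le> e * norm (y - x0)"
        using \<open>\<bar>C\<bar> * norm (y - x0) \<le> e\<close> by (intro mult_right_mono) auto
      finally show ?thesis .
    qed
    ultimately show "\<exists>d>0. \<forall>y. norm (y - x0) < d \<longrightarrow> norm (\<phi> y - \<phi> x0 - 0) \<le> e * norm (y - x0)"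
      using \<open>\<phi> x0 = 0\<close> by auto
  qed simp
qed

lemma real_analytic_on_imp_differentiable:
  assumes "real_analytic_on f S" "y \<in> S"
  shows "f differentiable (at y)"
  using real_analytic_on_second_derivative[OF assms] by (metis centre_in_ball)

lemma real_analytic_on_vec_second_derivative:
  fixes u :: "'e::euclidean_space \<Rightarrow> real^'m::finite"
  assumes analytic: "\<And>A. real_analytic_on (\<lambda>x. u x $ A) S" and "x0 \<in> S"
  obtains \<rho> H where "0 < \<rho>" "\<And>x. x \<in> ball x0 \<rho> \<Longrightarrow> u differentiable (at x)"
    "\<And>A a. ((\<lambda>x. frechet_derivative u (at x) a $ A) has_derivative H A a) (at x0)"
    "\<And>A a b. H A a b = H A b a"
proof -
  define du where "du A x = frechet_derivative (\<lambda>x. u x $ A) (at x)" for A x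
  have "\<forall>A. \<exists>\<rho> H. 0 < \<rho> \<and> (\<forall>x\<in>ball x0 \<rho>. (\<lambda>x. u x $ A) differentiable (at x))
          \<and> (\<forall>a. ((\<lambda>x. du A x a) has_derivative H a) (at x0)) \<and> (\<forall>a b. H a b = H b a)"
  proof
    fix A
    obtain \<rho> H where "0 < \<rho>" "\<And>x. x \<in> ball x0 \<rho> \<Longrightarrow> (\<lambda>x. u x $ A) differentiable (at x)"
      "\<And>a. ((\<lambda>x. du A x a) has_derivative H a) (at x0)" "\<And>a b. H a b = H b a"
      using real_analytic_on_second_derivative[OF analytic \<open>x0 \<in> S\<close>] unfolding du_def by blast
    then show "\<exists>\<rho> H. 0 < \<rho> \<and> (\<forall>x\<in>ball x0 \<rho>. (\<lambda>x. u x $ A) differentiable (at x))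
          \<and> (\<forall>a. ((\<lambda>x. du A x a) has_derivative H a) (at x0)) \<and> (\<forall>a b. H a b = H b a)"
      by blast
  qed
  then obtain \<rho>A where "\<forall>A. \<exists>H. 0 < \<rho>A A \<and> (\<forall>x\<in>ball x0 (\<rho>A A). (\<lambda>x. u x $ A) differentiable (at x))
          \<and> (\<forall>a. ((\<lambda>x. du A x a) has_derivative H a) (at x0)) \<and> (\<forall>a b. H a b = H b a)"
    by (rule choice[THEN exE])
  then obtain H where "\<forall>A. 0 < \<rho>A A \<and> (\<forall>x\<in>ball x0 (\<rho>A A). (\<lambda>x. u x $ A) differentiable (at x))
          \<and> (\<forall>a. ((\<lambda>x. du A x a) has_derivative H A a) (at x0)) \<and> (\<forall>a b. H A a b = H A b a)"
    by (rule choice[THEN exE])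
  then have \<rho>A: "\<And>A. 0 < \<rho>A A"
    and u_diff: "\<And>A x. x \<in> ball x0 (\<rho>A A) \<Longrightarrow> (\<lambda>x. u x $ A) differentiable (at x)"
    and H_deriv: "\<And>A a. ((\<lambda>x. du A x a) has_derivative H A a) (at x0)"
    and H_sym: "\<And>A a b. H A a b = H A b a"
    by blast+
  define \<rho> where "\<rho> = Min (range \<rho>A)"
  have "0 < \<rho>" unfolding \<rho>_def using \<rho>A by simp
  have u_deriv: "(u has_derivative (\<lambda>v. \<chi> A. du A x v)) (at x)" if "x \<in> ball x0 \<rho>" for x
  proof (rule has_derivative_vec_componentwise)
    fix A
    have "x \<in> ball x0 (\<rho>A A)" using that Min_le[of "range \<rho>A" "\<rho>A A"] unfolding \<rho>_def by auto
    then show "((\<lambda>x. u x $ A) has_derivative (\<lambda>v. (\<chi> A. du A x v) $ A)) (at x)"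
      using u_diff by (simp add: du_def frechet_derivative_works)
  qed
  show ?thesis
  proof (rule that)
    show "0 < \<rho>" "\<And>A a b. H A a b = H A b a" by (fact \<open>0 < \<rho>\<close> H_sym)+
    show "u differentiable (at x)" if "x \<in> ball x0 \<rho>" for x
      using u_deriv[OF that] by (rule differentiableI)
    show "((\<lambda>x. frechet_derivative u (at x) a $ A) has_derivative H A a) (at x0)" for A a
      by (rule has_derivative_transform_within_open[OF H_deriv, where s = "ball x0 \<rho>"])
         (use \<open>0 < \<rho>\<close> frechet_derivative_at[OF u_deriv, symmetric] in auto)
  qed
qed

lemma jet_has_derivative:
  fixes u :: "real^('k::finite + 'a::finite) \<Rightarrow> real^'m::finite"
  assumes "\<And>A. real_analytic_on (\<lambda>x. u x $ A) S" and "x0 \<in> S"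
  obtains D where "(jet u has_derivative D) (at x0)"
    "\<And>w. fst (D w) = w"
    "\<And>w A. fst (snd (D w)) $ A = (\<Sum>i\<in>UNIV. snd (snd (jet u x0)) $ A $ i * w $ i)"
    "\<And>w w' A. (\<Sum>i\<in>UNIV. snd (snd (D w)) $ A $ i * w' $ i) = (\<Sum>i\<in>UNIV. snd (snd (D w')) $ A $ i * w $ i)"
proof -
  obtain \<rho> H where "0 < \<rho>" and u_diff: "\<And>x. x \<in> ball x0 \<rho> \<Longrightarrow> u differentiable (at x)"
    and H_deriv: "\<And>A a. ((\<lambda>x. frechet_derivative u (at x) a $ A) has_derivative H A a) (at x0)"
    and H_sym: "\<And>A a b. H A a b = H A b a"
    by (rule real_analytic_on_vec_second_derivative[OF assms]) blast
  let ?du = "frechet_derivative u (at x0)"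
  have u_deriv: "(u has_derivative ?du) (at x0)"
    using u_diff[of x0] \<open>0 < \<rho>\<close> by (simp add: frechet_derivative_works)
  define D where "D v = (v, ?du v, \<chi> A i. H A (axis i 1) v)" for v
  have jet_deriv: "(jet u has_derivative D) (at x0)"
    unfolding jet_def[abs_def] D_def[abs_def]
    by (intro has_derivative_Pair has_derivative_ident u_deriv has_derivative_vec_componentwise)
       (simp add: H_deriv)
  show ?thesis
  proof (rule that[OF jet_deriv])
    show "fst (D w) = w" for w by (simp add: D_def)
    show "fst (snd (D w)) $ A = (\<Sum>i\<in>UNIV. snd (snd (jet u x0)) $ A $ i * w $ i)" for w A
    proof -
      have "linear (\<lambda>v. ?du v $ A)"
        using linear_compose[OF has_derivative_linear[OF u_deriv] bounded_linear.linear[OF bounded_linear_vec_nth]]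
        by (simp add: o_def)
      then have "?du w $ A = (\<Sum>i\<in>UNIV. w $ i * ?du (axis i 1) $ A)"
        by (rule linear_vec_expansion)
      also have "\<dots> = (\<Sum>i\<in>UNIV. snd (snd (jet u x0)) $ A $ i * w $ i)"
        by (rule sum.cong) (simp_all add: jet_def)
      finally show ?thesis by (simp add: D_def)
    qed
    show "(\<Sum>i\<in>UNIV. snd (snd (D w)) $ A $ i * w' $ i) = (\<Sum>i\<in>UNIV. snd (snd (D w')) $ A $ i * w $ i)"
      for w w' A
    proof -
      \<comment> \<open>Linearity of the second derivative in its first slot comes from its symmetry.\<close>
      have lin: "linear (H A a)" for a by (rule has_derivative_linear[OF H_deriv])
      have "(\<Sum>i\<in>UNIV. H A (axis i 1) w * w' $ i) = H A w w'"
        using linear_vec_expansion[OF lin, of w w'] by (simp add: H_sym[of A w] mult.commute)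
      also have "\<dots> = H A w' w" by (rule H_sym)
      also have "\<dots> = (\<Sum>i\<in>UNIV. H A (axis i 1) w' * w $ i)"
        using linear_vec_expansion[OF lin, of w' w] by (simp add: H_sym[of A w'] mult.commute)
      finally show ?thesis by (simp add: D_def)
    qed
  qed
qed

lemma bounded_linear_restrP:
  "bounded_linear (restrP :: real^('k::finite + 'a::finite)^'m::finite \<Rightarrow> real^'k^'m)"
proof -
  have "linear (restrP :: real^('k + 'a)^'m \<Rightarrow> real^'k^'m)"
    by (rule linearI) (simp_all add: restrP_def vec_eq_iff)
  then show ?thesis by (simp add: linear_conv_bounded_linear)
qed

lemma fgen_differentiable:
  fixes F :: "'m::finite \<Rightarrow> 'a::finite \<Rightarrow> ('k::finite, 'a, 'm) farg \<Rightarrow> real"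
  assumes "F A \<alpha> differentiable (at (fst z, fst (snd z), restrP (snd (snd z))))"
  shows "fgen F A \<alpha> differentiable (at z)"
proof -
  define L where "L h = (fst h, fst (snd h), restrP (snd (snd h)))" for h :: "('k, 'a, 'm) jet"
  have "bounded_linear L"
    unfolding L_def
    by (intro bounded_linear_Pair bounded_linear_fst bounded_linear_compose[OF bounded_linear_fst bounded_linear_snd]
        bounded_linear_compose[OF bounded_linear_restrP] bounded_linear_compose[OF bounded_linear_snd bounded_linear_snd])
  then have "(F A \<alpha> \<circ> L) differentiable (at z)"
    using assms by (intro differentiable_chain_at[OF bounded_linear_imp_differentiable]) (simp_all add: L_def)
  moreover have "(\<lambda>h :: ('k, 'a, 'm) jet. snd (snd h) $ A $ Inr \<alpha>) differentiable (at z)"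
    by (intro bounded_linear_imp_differentiable bounded_linear_compose[OF bounded_linear_vec_nth]
        bounded_linear_compose[OF bounded_linear_snd bounded_linear_snd])
  ultimately show ?thesis
    unfolding fgen_def[abs_def] L_def[symmetric] using differentiable_diff by (simp add: comp_def)
qed

lemma approx_solution_fgen_flat:
  assumes "approx_solution F U u x0"
  shows "fgen F A \<alpha> (jet u x0) = 0" and "((\<lambda>x. fgen F A \<alpha> (jet u x)) has_derivative (\<lambda>_. 0)) (at x0)"
proof -
  obtain C \<delta> where "\<delta> > 0" and bound: "\<And>x. x \<in> ball x0 \<delta> \<Longrightarrow>
      \<bar>snd (snd (jet u x)) $ A $ Inr \<alpha> - F A \<alpha> (x, u x, restrP (snd (snd (jet u x))))\<bar>
        \<le> C * (\<Sum>i\<in>UNIV. \<bar>x $ i - x0 $ i\<bar> ^ 2)"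
    using assms unfolding approx_solution_def by blast
  have "\<bar>fgen F A \<alpha> (jet u x)\<bar> \<le> C * norm (x - x0) ^ 2" if "x \<in> ball x0 \<delta>" for x
    using bound[OF that] by (simp add: fgen_def jet_def norm_vec_def L2_set_def sum_nonneg)
  from quadratic_bound_imp_flat[OF \<open>\<delta> > 0\<close> this]
  show "fgen F A \<alpha> (jet u x0) = 0" and "((\<lambda>x. fgen F A \<alpha> (jet u x)) has_derivative (\<lambda>_. 0)) (at x0)"
    by simp_all
qed

lemma EDS_gens_vanish_on_tangent:
  fixes F :: "'m::finite \<Rightarrow> 'a::finite \<Rightarrow> ('k::finite, 'a, 'm) farg \<Rightarrow> real"
  assumes jet_deriv: "(jet u has_derivative D) (at x0)"
    and D_base: "\<And>w. fst (D w) = w"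
    and D_contact: "\<And>w A. fst (snd (D w)) $ A = (\<Sum>i\<in>UNIV. snd (snd (jet u x0)) $ A $ i * w $ i)"
    and D_sym: "\<And>w w' A. (\<Sum>i\<in>UNIV. snd (snd (D w)) $ A $ i * w' $ i)
                          = (\<Sum>i\<in>UNIV. snd (snd (D w')) $ A $ i * w $ i)"
    and fgen_zero: "\<And>A \<alpha>. fgen F A \<alpha> (jet u x0) = 0"
    and fgen_flat: "\<And>A \<alpha>. ((\<lambda>x. fgen F A \<alpha> (jet u x)) has_derivative (\<lambda>_. 0)) (at x0)"
    and fgen_diff: "\<And>A \<alpha>. fgen F A \<alpha> differentiable (at (jet u x0))"
    and gen: "(q, \<psi>) \<in> EDS_gens F" and "length vs = q" and vs: "set vs \<subseteq> range D"
  shows "\<psi> (jet u x0) vs = 0"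
proof -
  from gen consider
      (fgen) A \<alpha> where "q = 0" "\<psi> = (\<lambda>z vs. fgen F A \<alpha> z)"
    | (dfgen) A \<alpha> where "q = 1" "\<psi> = (\<lambda>z vs. frechet_derivative (fgen F A \<alpha>) (at z) (hd vs))"
    | (contact) A where "q = 1"
        "\<psi> = (\<lambda>z vs. fst (snd (hd vs)) $ A - (\<Sum>i\<in>UNIV. snd (snd z) $ A $ i * fst (hd vs) $ i))"
    | (contact2) A where "q = 2"
        "\<psi> = (\<lambda>z vs. (\<Sum>i\<in>UNIV. snd (snd (vs ! 0)) $ A $ i * fst (vs ! 1) $ i
                             - snd (snd (vs ! 1)) $ A $ i * fst (vs ! 0) $ i))"
    unfolding EDS_gens_def by blast
  then show ?thesis
  proof cases
    case fgen
    then show ?thesis using fgen_zero by simp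
  next
    case (dfgen A \<alpha>)
    then obtain w where w: "hd vs = D w" using vs \<open>length vs = q\<close> by (cases vs) auto
    let ?L = "frechet_derivative (fgen F A \<alpha>) (at (jet u x0))"
    have "((fgen F A \<alpha> \<circ> jet u) has_derivative ?L \<circ> D) (at x0)"
      using jet_deriv fgen_diff[unfolded frechet_derivative_works] by (rule diff_chain_at)
    from has_derivative_unique[OF this] have "?L \<circ> D = (\<lambda>_. 0)"
      using fgen_flat by (simp add: comp_def)
    then show ?thesis using dfgen w by (metis comp_apply)
  next
    case (contact A)
    then obtain w where "hd vs = D w" using vs \<open>length vs = q\<close> by (cases vs) auto
    then show ?thesis using contact D_base D_contact by simp
  next
    case (contact2 A)
    then have "vs ! 0 \<in> set vs" "vs ! 1 \<in> set vs" using \<open>length vs = q\<close> by auto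
    then obtain w w' where "vs ! 0 = D w" "vs ! 1 = D w'" using vs by blast
    then show ?thesis using contact2 D_base D_sym[of w A w'] by (simp add: sum_subtractf)
  qed
qed

theorem proposition5p4:
  fixes F :: "'m::finite \<Rightarrow> 'a::finite \<Rightarrow> ('k::finite, 'a, 'm) farg \<Rightarrow> real"
    and U :: "('k, 'a, 'm) farg set"
    and u :: "real^('k + 'a) \<Rightarrow> real^'m"
    and x0 :: "real^('k + 'a)"
    and z0 :: "('k, 'a, 'm) jet"
  assumes "open U"
    and "\<forall>A \<alpha>. real_analytic_on (F A \<alpha>) U"
    and "z0 \<in> Utilde U"
    and "approx_solution F U u x0"
    and "jet u x0 = z0"
  shows "integral_element (EDS F) z0 (tangent_jet u x0) \<and>
         (\<forall>E es. subspace E \<and> E \<subseteq> tangent_jet u x0 \<and>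
                 distinct es \<and> independent (set es) \<and> span (set es) = E
             \<longrightarrow> tangent_jet u x0 \<subseteq> Hpolar (EDS F) z0 es)"
proof -
  obtain S where "\<And>A. real_analytic_on (\<lambda>x. u x $ A) S" "x0 \<in> S"
    using assms(4) unfolding approx_solution_def by blast
  then obtain D where jet_deriv: "(jet u has_derivative D) (at x0)"
    and D_props: "\<And>w. fst (D w) = w"
      "\<And>w A. fst (snd (D w)) $ A = (\<Sum>i\<in>UNIV. snd (snd (jet u x0)) $ A $ i * w $ i)"
      "\<And>w w' A. (\<Sum>i\<in>UNIV. snd (snd (D w)) $ A $ i * w' $ i)
                  = (\<Sum>i\<in>UNIV. snd (snd (D w')) $ A $ i * w $ i)"
    using jet_has_derivative by blast
  have tangent: "tangent_jet u x0 = range D"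
    unfolding tangent_jet_def using frechet_derivative_at[OF jet_deriv] by simp
  have "fgen F A \<alpha> differentiable (at (jet u x0))" for A \<alpha>
    using assms(2,3,5) by (intro fgen_differentiable real_analytic_on_imp_differentiable) (auto simp: Utilde_def)
  note generators_vanish = EDS_gens_vanish_on_tangent[OF jet_deriv D_props
      approx_solution_fgen_flat[OF assms(4)] this]
  have "subspace (range D)"
    using linear_subspace_image[OF has_derivative_linear[OF jet_deriv] subspace_UNIV] by simp
  then have "integral_element (EDS F) z0 (range D)"
    unfolding EDS_def assms(5)[symmetric] using generators_vanish by (rule integral_element_alg_ideal)
  then show ?thesis
    unfolding tangent by (meson integral_element_subset_Hpolar span_superset order_trans)
qed

end
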